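(* Let $1 \le n \le N$ be integers, let $\mathcal{X} = \{1,\ldots,N\}^n$, let $P$ be the uniform distribution on $\mathcal{X}$ (weights $1/N^n$), and let $Q$ be the uniform distribution on the set $\mathcal{X}_*$ of all $x = (x_1,\ldots,x_n) \in \mathcal{X}$ with pairwise distinct components (weights $1/[N]_n$ on $\mathcal{X}_*$ and $0$ elsewhere). Then \[ \frac{n(n-1)}{2N} \ \le \ \log \rho(Q,P) \ \le \ - \frac{n}{2} \log \Bigl( 1 - \frac{n-1}{N} \Bigr) . \]
   Context: For real $a$ and integers $m \ge 1$, $[a]_m := \prod_{i=0}^{m-1}(a-i)$, and $[a]_0 := 1$. For probability measures $Q,P$ on $(\mathcal{X},\mathcal{A})$, $\rho(Q,P) := \sup_{A \in \mathcal{A}} Q(A)/P(A)$ with the conventions $0/0 := 0$ and $a/0 := \infty$ for $a>0$. *)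

theory Defs
  imports "HOL-Probability.Probability"
begin

definition rho :: "'a measure \<Rightarrow> 'a measure \<Rightarrow> ereal" where
  "rho Q P = (SUP A \<in> sets P.
      (if measure P A = 0 then (if measure Q A = 0 then 0 else \<infinity>)
       else ereal (measure Q A / measure P A)))"

definition cube :: "nat \<Rightarrow> nat \<Rightarrow> nat list set" where
  "cube N n = {x. length x = n \<and> set x \<subseteq> {1..N}}"

definition cube_distinct :: "nat \<Rightarrow> nat \<Rightarrow> nat list set" where
  "cube_distinct N n = {x \<in> cube N n. distinct x}"

end

theory Submission
  imports Defs
begin

text \<open>
  Only the sets of positive probability count in the supremum, and on them the ratio of two
  uniform distributions on nested sets D \<subseteq> C is card (D \<inter> A) / card (C \<inter> A) times
  card C / card D, which is maximal for A = D. Hence \<rho>(Q,P) = N^n / [N]_n and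
  ln \<rho>(Q,P) = - \<Sum>i<n. ln (1 - i/N). The lower bound follows from ln (1 - x) \<le> -x, the upper
  bound from pairing the terms i and n - 1 - i and (1 - x)(1 - y) \<ge> 1 - (x + y).
\<close>

lemma rho_pmf_of_set_subset:
  assumes "finite C" and "D \<subseteq> C" and "D \<noteq> {}"
  shows "rho (measure_pmf (pmf_of_set D)) (measure_pmf (pmf_of_set C)) = ereal (card C / card D)"
proof -
  let ?P = "measure_pmf (pmf_of_set C)" and ?Q = "measure_pmf (pmf_of_set D)"
  have "finite D" using assms finite_subset by blast
  have "C \<noteq> {}" using assms by blast
  have card_D_pos: "real (card D) > 0" and card_C_pos: "real (card C) > 0"
    using assms \<open>finite D\<close> by (auto simp: card_gt_0_iff)
  have P_eq: "measure ?P A = card (C \<inter> A) / card C" for A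
    by (rule measure_pmf_of_set[OF \<open>C \<noteq> {}\<close> \<open>finite C\<close>])
  have Q_eq: "measure ?Q A = card (D \<inter> A) / card D" for A
    by (rule measure_pmf_of_set[OF \<open>D \<noteq> {}\<close> \<open>finite D\<close>])
  define ratio where "ratio A = (if measure ?P A = 0 then (if measure ?Q A = 0 then 0 else \<infinity>)
      else ereal (measure ?Q A / measure ?P A))" for A
  have ratio_le: "ratio A \<le> ereal (card C / card D)" for A
  proof (cases "card (C \<inter> A) = 0")
    case True
    then have "D \<inter> A = {}" using assms by auto
    then show ?thesis using True card_D_pos unfolding ratio_def P_eq Q_eq by simp
  next
    case False
    have "card (D \<inter> A) \<le> card (C \<inter> A)"
      using assms by (intro card_mono) auto
    then have frac_le_1: "real (card (D \<inter> A)) / card (C \<inter> A) \<le> 1"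
      using False by (simp add: divide_le_eq_1)
    have "real (card (D \<inter> A)) / card (C \<inter> A) * (card C / card D) \<le> card C / card D"
      using mult_right_mono[OF frac_le_1, of "card C / card D"] by simp
    then show ?thesis
      using False card_C_pos card_D_pos unfolding ratio_def P_eq Q_eq by (simp add: field_simps)
  qed
  have "ratio D = ereal (card C / card D)"
    using assms \<open>C \<noteq> {}\<close> card_C_pos card_D_pos unfolding ratio_def P_eq Q_eq
    by (simp add: Int_absorb1 Int_absorb2 field_simps)
  then have "(SUP A. ratio A) = ereal (card C / card D)"
    by (metis (mono_tags) SUP_upper UNIV_I antisym SUP_least ratio_le)
  then show ?thesis unfolding rho_def ratio_def by simp
qed

lemma finite_cube: "finite (cube N n)"
  unfolding cube_def by (rule finite_subset[OF _ finite_lists_length_eq[of "{1..N}" n]]) auto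

lemma card_cube: "card (cube N n) = N ^ n"
proof -
  have "cube N n = {xs. set xs \<subseteq> {1..N} \<and> length xs = n}" unfolding cube_def by auto
  then show ?thesis by (simp add: card_lists_length_eq)
qed

lemma cube_distinct_subset_cube: "cube_distinct N n \<subseteq> cube N n"
  unfolding cube_distinct_def by auto

lemma cube_distinct_nonempty: "n \<le> N \<Longrightarrow> cube_distinct N n \<noteq> {}"
proof -
  assume "n \<le> N"
  then have "[1..<Suc n] \<in> cube_distinct N n" by (auto simp: cube_distinct_def cube_def)
  then show ?thesis by blast
qed

lemma prod_atLeastAtMost_top: "k \<le> N \<Longrightarrow> \<Prod>{N - k + 1..N} = (\<Prod>i<k. N - i :: nat)"
proof (induction k)
  case (Suc k)
  have "{N - Suc k + 1..N} = insert (N - k) {N - k + 1..N}" using Suc.prems by auto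
  then show ?case using Suc by (simp add: lessThan_Suc mult.commute)
qed simp

lemma card_cube_distinct:
  assumes "n \<le> N"
  shows "card (cube_distinct N n) = (\<Prod>i<n. N - i)"
proof -
  have "cube_distinct N n = {xs. length xs = n \<and> distinct xs \<and> set xs \<subseteq> {1..N}}"
    unfolding cube_distinct_def cube_def by auto
  then have "card (cube_distinct N n) = \<Prod>{N - n + 1..N}"
    using assms by (simp only: card_lists_distinct_length_eq finite_atLeastAtMost card_atLeastAtMost) simp
  then show ?thesis
    using assms by (simp only: prod_atLeastAtMost_top)
qed

lemma ln_power_div_falling_prod:
  assumes "n \<le> N" and "0 < N"
  shows "ln (real N ^ n / (\<Prod>i<n. real (N - i))) = - (\<Sum>i<n. ln (1 - real i / real N))"
proof -
  have factor: "real N / real (N - i) = inverse (1 - real i / real N)" if "i < n" for i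
    using that assms by (simp add: of_nat_diff field_simps)
  have pos: "1 - real i / real N > 0" if "i < n" for i
    using that assms by (simp add: field_simps)
  have "real N ^ n / (\<Prod>i<n. real (N - i)) = (\<Prod>i<n. real N / real (N - i))"
    by (simp add: prod_dividef)
  also have "\<dots> = (\<Prod>i<n. inverse (1 - real i / real N))"
    using factor by (intro prod.cong) auto
  also have "ln \<dots> = (\<Sum>i<n. - ln (1 - real i / real N))"
    by (subst ln_prod) (use pos assms in \<open>auto simp: ln_inverse\<close>)
  finally show ?thesis by (simp add: sum_negf)
qed

lemma ln_one_minus_add_le:
  fixes x y :: real
  assumes "0 \<le> x" and "0 \<le> y" and "x + y < 1"
  shows "ln (1 - (x + y)) \<le> ln (1 - x) + ln (1 - y)"
proof -
  have "1 - (x + y) \<le> (1 - x) * (1 - y)"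
    using mult_nonneg_nonneg[OF assms(1,2)] by (simp add: algebra_simps)
  then have "ln (1 - (x + y)) \<le> ln ((1 - x) * (1 - y))" using assms by simp
  also have "\<dots> = ln (1 - x) + ln (1 - y)" using assms by (simp add: ln_mult)
  finally show ?thesis .
qed

lemma sum_reflect_lower_bound:
  fixes f :: "nat \<Rightarrow> real"
  assumes "\<And>i. i < n \<Longrightarrow> c \<le> f i + f (n - Suc i)"
  shows "real n * c \<le> 2 * (\<Sum>i<n. f i)"
proof -
  have "real n * c \<le> (\<Sum>i<n. f i + f (n - Suc i))"
    using sum_mono[of "{..<n}" "\<lambda>_. c"] assms by simp
  also have "\<dots> = 2 * (\<Sum>i<n. f i)"
    by (simp add: sum.distrib sum.nat_diff_reindex)
  finally show ?thesis .
qed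

lemma sum_of_nat_lessThan: "(\<Sum>i<n. real i) = real n * (real n - 1) / 2"
  by (induction n) (auto simp: field_simps)

lemma sum_ln_one_minus_upper:
  assumes "n \<le> N" and "0 < N"
  shows "(\<Sum>i<n. ln (1 - real i / real N)) \<le> - real n * (real n - 1) / (2 * real N)"
proof -
  have "ln (1 - real i / real N) \<le> - (real i / real N)" if "i < n" for i
    using ln_le_minus_one[of "1 - real i / real N"] that assms by (simp add: field_simps)
  then have "(\<Sum>i<n. ln (1 - real i / real N)) \<le> (\<Sum>i<n. - (real i / real N))"
    by (intro sum_mono) auto
  also have "\<dots> = - real n * (real n - 1) / (2 * real N)"
    by (simp add: sum_negf flip: sum_divide_distrib) (simp add: sum_of_nat_lessThan)
  finally show ?thesis .
qed

lemma sum_ln_one_minus_lower: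
  assumes "1 \<le> n" and "n \<le> N"
  shows "real n / 2 * ln (1 - (real n - 1) / real N) \<le> (\<Sum>i<n. ln (1 - real i / real N))"
proof -
  have pair: "ln (1 - (real n - 1) / real N) \<le>
      ln (1 - real i / real N) + ln (1 - real (n - Suc i) / real N)" if "i < n" for i
  proof -
    have "real i / real N + real (n - Suc i) / real N = (real n - 1) / real N"
      using that by (simp add: of_nat_diff add_divide_distrib [symmetric])
    moreover have "(real n - 1) / real N < 1" using assms by (simp add: field_simps)
    ultimately show ?thesis
      using ln_one_minus_add_le[of "real i / real N" "real (n - Suc i) / real N"] by simp
  qed
  from sum_reflect_lower_bound[where f = "\<lambda>i. ln (1 - real i / real N)", OF pair] show ?thesis by simp
qed

theorem mainTheorem2:
  fixes n N :: nat
  assumes "1 \<le> n" and "n \<le> N"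
  shows "\<exists>r::real. r > 0 \<and>
    rho (measure_pmf (pmf_of_set (cube_distinct N n))) (measure_pmf (pmf_of_set (cube N n))) = ereal r \<and>
    real n * (real n - 1) / (2 * real N) \<le> ln r \<and>
    ln r \<le> - (real n / 2) * ln (1 - (real n - 1) / real N)"
proof -
  have "0 < N" using assms by simp
  define r where "r = real N ^ n / (\<Prod>i<n. real (N - i))"
  have "(\<Prod>i<n. real (N - i)) > 0" using assms by (intro prod_pos) auto
  then have "r > 0" using \<open>0 < N\<close> by (simp add: r_def)
  moreover have "rho (measure_pmf (pmf_of_set (cube_distinct N n))) (measure_pmf (pmf_of_set (cube N n)))
      = ereal r"
    by (simp add: rho_pmf_of_set_subset finite_cube cube_distinct_subset_cube card_cube
        cube_distinct_nonempty card_cube_distinct assms r_def)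
  moreover have "ln r = - (\<Sum>i<n. ln (1 - real i / real N))"
    unfolding r_def by (rule ln_power_div_falling_prod[OF assms(2) \<open>0 < N\<close>])
  ultimately show ?thesis
    using sum_ln_one_minus_upper[OF assms(2) \<open>0 < N\<close>] sum_ln_one_minus_lower[OF assms] by auto
qed

end
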